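(* Let $(Y,\lambda)\in\{-1,1\}\times\{-1,1\}^m$ follow the Ising model $$P(Y,\lambda)=\frac1Z\exp\Big(\theta_Y Y+\sum_i\theta_i\lambda_iY+\sum_{(i,j)\in E_\lambda}\theta_{ij}\lambda_i\lambda_j\Big),$$ with all canonical parameters positive. Here $E_\lambda$ is a set of $|E_\lambda|=d$ unordered pairs of distinct sources, each source in at most one pair. For a source $i$ that belongs to some pair in $E_\lambda$, $$\bar a_i-a_i\in\Big[\frac{\varepsilon_{\min}b_{\min}}{m-1}-\frac{(d-1)\varepsilon_{\max}}{(m-1)(m-2)b_{\min}^2a_{\min}^2},\ \frac{\varepsilon_{\max}}{(m-1)b_{\min}a_{\min}}\Big].$$ For a source $i$ that belongs to no pair in $E_\lambda$, $$\bar a_i-a_i\in\Big[\frac{-d\varepsilon_{\max}}{(m-1)(m-2)b_{\min}^2a_{\min}^2},\ \frac{-d\varepsilon_{\min}b_{\min}^2}{(m-1)(m-2)}\Big].$$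
   Context: Accuracies. - $a_i=\mathbb E[\lambda_iY]$ and $a_{\min}=\min_ia_i$. - $\bar a_i=\mathbb E_{\{j,k\}}\Big[\sqrt{\mathbb E[\lambda_i\lambda_j]\mathbb E[\lambda_i\lambda_k]/\mathbb E[\lambda_j\lambda_k]}\Big]$, where the unordered pair $\{j,k\}\subset[m]\setminus\{i\}$ is uniformly random. - $b_{\min}$ is a number at most $\min_{i\ne j}\mathbb E[\lambda_i\lambda_j]$. The paper defines it as the minimum over all pairs of both the population pairwise moments $\mathbb E[\lambda_i\lambda_j]$ and their empirical counterparts. Misspecification. For $(i,j)\in E_\lambda$, $\varepsilon_{ij}=\mathbb E[\lambda_i\lambda_j]-\mathbb E[\lambda_iY]\mathbb E[\lambda_jY]$, with $0<\varepsilon_{\min}\le\varepsilon_{ij}\le\varepsilon_{\max}$ for all $(i,j)\in E_\lambda$. *)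

theory Defs
  imports Complex_Main "HOL-Library.FuncSet"
begin

text \<open>Unordered pairs of sources
  (edges of E_lambda) are two-element sets of indices.\<close>

definition ising_space :: "nat \<Rightarrow> (real \<times> (nat \<Rightarrow> real)) set" where
  "ising_space m = {-1, 1} \<times> ({0..<m} \<rightarrow>\<^sub>E {-1, 1})"

definition ising_energy ::
  "nat \<Rightarrow> real \<Rightarrow> (nat \<Rightarrow> real) \<Rightarrow> (nat set \<Rightarrow> real) \<Rightarrow> nat set set
     \<Rightarrow> real \<times> (nat \<Rightarrow> real) \<Rightarrow> real" where
  "ising_energy m thY th thE E w =
     thY * fst w + (\<Sum>i<m. th i * snd w i * fst w) + (\<Sum>e\<in>E. thE e * (\<Prod>k\<in>e. snd w k))"

definition ising_expect ::
  "nat \<Rightarrow> real \<Rightarrow> (nat \<Rightarrow> real) \<Rightarrow> (nat set \<Rightarrow> real) \<Rightarrow> nat set set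
     \<Rightarrow> (real \<times> (nat \<Rightarrow> real) \<Rightarrow> real) \<Rightarrow> real" where
  "ising_expect m thY th thE E f =
     (\<Sum>w\<in>ising_space m. exp (ising_energy m thY th thE E w) * f w)
     / (\<Sum>w\<in>ising_space m. exp (ising_energy m thY th thE E w))"

definition ising_acc ::
  "nat \<Rightarrow> real \<Rightarrow> (nat \<Rightarrow> real) \<Rightarrow> (nat set \<Rightarrow> real) \<Rightarrow> nat set set \<Rightarrow> nat \<Rightarrow> real" where
  "ising_acc m thY th thE E i = ising_expect m thY th thE E (\<lambda>w. snd w i * fst w)"

definition ising_mom ::
  "nat \<Rightarrow> real \<Rightarrow> (nat \<Rightarrow> real) \<Rightarrow> (nat set \<Rightarrow> real) \<Rightarrow> nat set set \<Rightarrow> nat \<Rightarrow> nat \<Rightarrow> real" where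
  "ising_mom m thY th thE E i j = ising_expect m thY th thE E (\<lambda>w. snd w i * snd w j)"

definition ising_amin ::
  "nat \<Rightarrow> real \<Rightarrow> (nat \<Rightarrow> real) \<Rightarrow> (nat set \<Rightarrow> real) \<Rightarrow> nat set set \<Rightarrow> real" where
  "ising_amin m thY th thE E = Min (ising_acc m thY th thE E ` {0..<m})"

text \<open>Unordered pairs {j,k} of [m] - {i}, each represented once as (j,k) with j < k.\<close>
definition other_pairs :: "nat \<Rightarrow> nat \<Rightarrow> (nat \<times> nat) set" where
  "other_pairs m i = {(j, k). j < k \<and> k < m \<and> j \<noteq> i \<and> k \<noteq> i}"

definition ising_abar ::
  "nat \<Rightarrow> real \<Rightarrow> (nat \<Rightarrow> real) \<Rightarrow> (nat set \<Rightarrow> real) \<Rightarrow> nat set set \<Rightarrow> nat \<Rightarrow> real" where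
  "ising_abar m thY th thE E i =
     (\<Sum>(j, k)\<in>other_pairs m i.
        sqrt (ising_mom m thY th thE E i j * ising_mom m thY th thE E i k
              / ising_mom m thY th thE E j k))
     / real (card (other_pairs m i))"

end

theory Submission
  imports Defs
begin

text \<open>
  Take two independent copies (Y, lambda) and (Y', lambda') of the model and exchange
  Y lambda_x with Y' lambda'_x for every source x outside the E-component of j.  This preserves
  the joint weight and turns lambda_j lambda_k into (lambda_j Y) (lambda'_k Y'), so
  E[lambda_j lambda_k] = a_j a_k whenever {j, k} is not an edge.  Hence the triplet estimate
  sqrt (E[lambda_i lambda_j] E[lambda_i lambda_k] / E[lambda_j lambda_k]) averaged in abar_i is
  exactly a_i, except on the pairs {j, k} in E, where it is a_i sqrt (a_j a_k / (a_j a_k + eps_jk)),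
  and on the m - 2 pairs containing the partner p of i, where it is
  a_i sqrt ((a_i a_p + eps_ip) / (a_i a_p)).  Elementary bounds on these square roots, based on
  bmin <= a_j <= 1, together with the count (m - 1) (m - 2) / 2 of all pairs give the estimates.
  The accuracies are positive because the contributions to E[lambda_i Y] of a configuration and
  of its images under flipping lambda_i (and lambda_p) add up to a positive number.
\<close>

type_synonym config = "real \<times> (nat \<Rightarrow> real)"

lemma ising_space_finite: "finite (ising_space m)"
  unfolding ising_space_def by (auto intro!: finite_PiE)

lemma ising_space_nonempty: "ising_space m \<noteq> {}"
  unfolding ising_space_def by (auto simp: PiE_eq_empty_iff)

lemma ising_space_label: "w \<in> ising_space m \<Longrightarrow> fst w \<in> {-1, 1}"
  unfolding ising_space_def by auto

lemma ising_space_source: "w \<in> ising_space m \<Longrightarrow> i < m \<Longrightarrow> snd w i \<in> {-1, 1}"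
  unfolding ising_space_def by auto

lemma ising_partition_pos: "0 < (\<Sum>w\<in>ising_space m. exp (ising_energy m thY th thE E w))"
  by (intro sum_pos ising_space_finite ising_space_nonempty) auto

lemma ising_expect_pos:
  "0 < (\<Sum>w\<in>ising_space m. exp (ising_energy m thY th thE E w) * f w) \<Longrightarrow>
   0 < ising_expect m thY th thE E f"
  unfolding ising_expect_def using ising_partition_pos by simp

lemma ising_expect_le_1:
  assumes "\<forall>w\<in>ising_space m. f w \<le> 1"
  shows "ising_expect m thY th thE E f \<le> 1"
proof -
  have "(\<Sum>w\<in>ising_space m. exp (ising_energy m thY th thE E w) * f w)
      \<le> (\<Sum>w\<in>ising_space m. exp (ising_energy m thY th thE E w))"
    using assms by (intro sum_mono) (simp add: mult_le_cancel_left1)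
  then show ?thesis
    unfolding ising_expect_def using ising_partition_pos by (simp add: pos_divide_le_eq)
qed

section \<open>Factorization of pairwise moments\<close>

(* Rescaling by Y Y' exchanges the products lambda_x Y, x in R, between the two copies. *)
definition exchange_on :: "nat set \<Rightarrow> config \<times> config \<Rightarrow> config \<times> config" where
  "exchange_on R = (\<lambda>((Y, l), (Y', l')).
     ((Y, \<lambda>x. if x \<in> R then Y * Y' * l' x else l x), (Y', \<lambda>x. if x \<in> R then Y * Y' * l x else l' x)))"

lemma exchange_on_in_space:
  assumes "R \<subseteq> {0..<m}" and "p \<in> ising_space m \<times> ising_space m"
  shows "exchange_on R p \<in> ising_space m \<times> ising_space m"
  using assms unfolding exchange_on_def ising_space_def
  by (auto simp: PiE_iff extensional_def split: prod.splits)

lemma exchange_on_exchange_on: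
  assumes "p \<in> ising_space m \<times> ising_space m"
  shows "exchange_on R (exchange_on R p) = p"
  using assms unfolding exchange_on_def ising_space_def by (auto split: prod.splits)

lemma bij_betw_exchange_on:
  "R \<subseteq> {0..<m} \<Longrightarrow>
   bij_betw (exchange_on R) (ising_space m \<times> ising_space m) (ising_space m \<times> ising_space m)"
  by (rule bij_betw_byWitness[where f' = "exchange_on R"])
    (use exchange_on_exchange_on exchange_on_in_space in blast)+

lemma ising_energy_exchange_on:
  assumes pairs: "\<forall>e\<in>E. card e = 2" and split: "\<forall>e\<in>E. e \<subseteq> R \<or> e \<inter> R = {}"
    and Y: "Y \<in> {-1, 1}" "Y' \<in> {-1, 1}"
  shows "ising_energy m thY th thE E (Y, \<lambda>x. if x \<in> R then Y * Y' * l' x else l x)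
       + ising_energy m thY th thE E (Y', \<lambda>x. if x \<in> R then Y * Y' * l x else l' x)
       = ising_energy m thY th thE E (Y, l) + ising_energy m thY th thE E (Y', l')"
proof -
  have source: "th x * (if x \<in> R then Y * Y' * l' x else l x) * Y
      + th x * (if x \<in> R then Y * Y' * l x else l' x) * Y' = th x * l x * Y + th x * l' x * Y'" for x
    using Y by (cases "x \<in> R") auto
  have edge: "(\<Prod>k\<in>e. if k \<in> R then Y * Y' * f k else g k) = (if e \<subseteq> R then prod f e else prod g e)"
    if "e \<in> E" for e f g
  proof (cases "e \<subseteq> R")
    case True
    then have "(\<Prod>k\<in>e. if k \<in> R then Y * Y' * f k else g k) = (Y * Y') ^ card e * prod f e"
      by (simp add: prod.distrib subset_iff)
    with True Y pairs that show ?thesis by auto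
  next
    case False
    with split that have "(\<Prod>k\<in>e. if k \<in> R then Y * Y' * f k else g k) = prod g e"
      by (intro prod.cong) auto
    with False show ?thesis by simp
  qed
  have "(\<Sum>x<m. th x * (if x \<in> R then Y * Y' * l' x else l x) * Y)
      + (\<Sum>x<m. th x * (if x \<in> R then Y * Y' * l x else l' x) * Y')
      = (\<Sum>x<m. th x * l x * Y) + (\<Sum>x<m. th x * l' x * Y')"
    using source by (simp add: sum.distrib[symmetric])
  moreover have "(\<Sum>e\<in>E. thE e * (\<Prod>k\<in>e. if k \<in> R then Y * Y' * l' k else l k))
      + (\<Sum>e\<in>E. thE e * (\<Prod>k\<in>e. if k \<in> R then Y * Y' * l k else l' k))
      = (\<Sum>e\<in>E. thE e * prod l e) + (\<Sum>e\<in>E. thE e * prod l' e)"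
    unfolding sum.distrib[symmetric] by (intro sum.cong) (auto simp: edge)
  ultimately show ?thesis
    unfolding ising_energy_def by simp
qed

lemma ising_mom_eq_acc_mult:
  assumes pairs: "\<forall>e\<in>E. card e = 2" and split: "\<forall>e\<in>E. e \<subseteq> R \<or> e \<inter> R = {}"
    and R: "R \<subseteq> {0..<m}" and j: "j \<notin> R" and k: "k \<in> R"
  shows "ising_mom m thY th thE E j k = ising_acc m thY th thE E j * ising_acc m thY th thE E k"
proof -
  define S where "S = ising_space m"
  define W where "W w = exp (ising_energy m thY th thE E w)" for w
  define F where "F p = W (fst p) * W (snd p) * (snd (fst p) j * snd (fst p) k)" for p
  define G where "G p = W (fst p) * W (snd p) * (snd (fst p) j * fst (fst p))
    * (snd (snd p) k * fst (snd p))" for p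
  have "sum F (S \<times> S) = sum (F \<circ> exchange_on R) (S \<times> S)"
    using sum.reindex_bij_betw[OF bij_betw_exchange_on[OF R], of F] by (simp add: S_def)
  also have "\<dots> = sum G (S \<times> S)"
  proof (rule sum.cong)
    fix p assume "p \<in> S \<times> S"
    then obtain Y l Y' l' where p: "p = ((Y, l), (Y', l'))" and Y: "Y \<in> {-1, 1}" "Y' \<in> {-1, 1}"
      unfolding S_def ising_space_def by auto
    have "W (Y, \<lambda>x. if x \<in> R then Y * Y' * l' x else l x) * W (Y', \<lambda>x. if x \<in> R then Y * Y' * l x else l' x)
        = W (Y, l) * W (Y', l')"
      unfolding W_def exp_add[symmetric] using ising_energy_exchange_on[OF pairs split Y] by simp
    then show "(F \<circ> exchange_on R) p = G p"
      unfolding F_def G_def p exchange_on_def using j k by (simp add: algebra_simps)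
  qed simp
  also have "sum G (S \<times> S) = (\<Sum>w\<in>S. W w * (snd w j * fst w)) * (\<Sum>w\<in>S. W w * (snd w k * fst w))"
    unfolding sum_product sum.cartesian_product G_def by (simp add: algebra_simps case_prod_beta)
  finally have "(\<Sum>w\<in>S. W w * (snd w j * snd w k)) * sum W S
      = (\<Sum>w\<in>S. W w * (snd w j * fst w)) * (\<Sum>w\<in>S. W w * (snd w k * fst w))"
    unfolding sum_product sum.cartesian_product F_def by (simp add: algebra_simps case_prod_beta)
  moreover have "sum W S > 0"
    unfolding S_def W_def by (rule ising_partition_pos)
  ultimately show ?thesis
    unfolding ising_mom_def ising_acc_def ising_expect_def W_def[symmetric] S_def[symmetric]
    by (simp add: field_simps power2_eq_square)
qed

section \<open>Positivity of the accuracies\<close>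

definition flip_source :: "nat \<Rightarrow> config \<Rightarrow> config" where
  "flip_source i w = (fst w, (snd w)(i := - snd w i))"

lemma flip_source_in_space: "i < m \<Longrightarrow> w \<in> ising_space m \<Longrightarrow> flip_source i w \<in> ising_space m"
  unfolding flip_source_def ising_space_def by (auto simp: PiE_iff extensional_def)

lemma flip_source_flip_source [simp]: "flip_source i (flip_source i w) = w"
  unfolding flip_source_def by simp

lemma sum_flip_source:
  assumes "i < m"
  shows "(\<Sum>w\<in>ising_space m. f (flip_source i w)) = (\<Sum>w\<in>ising_space m. f w)"
proof -
  have "bij_betw (flip_source i) (ising_space m) (ising_space m)"
    by (rule bij_betw_byWitness[where f' = "flip_source i"]) (use assms flip_source_in_space in auto)
  then show ?thesis
    by (rule sum.reindex_bij_betw)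
qed

lemma prod_fun_upd_uminus:
  fixes f :: "'a \<Rightarrow> 'b :: comm_ring_1"
  assumes "finite e"
  shows "(\<Prod>k\<in>e. (f(i := - f i)) k) = (if i \<in> e then - prod f e else prod f e)"
proof (cases "i \<in> e")
  case True
  have "(\<Prod>k\<in>e - {i}. (f(i := - f i)) k) = prod f (e - {i})"
    by (rule prod.cong) auto
  then show ?thesis
    using True prod.remove[OF assms True, of f] prod.remove[OF assms True, of "f(i := - f i)"] by simp
qed (auto intro: prod.cong)

lemma ising_energy_flip_source:
  assumes E: "finite E" "\<forall>e\<in>E. finite e" and i: "i < m"
  shows "ising_energy m thY th thE E (flip_source i w) = ising_energy m thY th thE E w
     - 2 * th i * snd w i * fst w - 2 * (\<Sum>e\<in>{e\<in>E. i \<in> e}. thE e * prod (snd w) e)"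
proof -
  have sources: "(\<Sum>l<m. th l * ((snd w)(i := - snd w i)) l * fst w)
      = (\<Sum>l<m. th l * snd w l * fst w) - 2 * th i * snd w i * fst w"
    using i by (simp add: sum.remove[of "{..<m}" i])
  have "thE e * (\<Prod>k\<in>e. ((snd w)(i := - snd w i)) k)
      = thE e * prod (snd w) e - (if i \<in> e then 2 * (thE e * prod (snd w) e) else 0)" if "e \<in> E" for e
    using E that by (simp only: prod_fun_upd_uminus) simp
  then have "(\<Sum>e\<in>E. thE e * (\<Prod>k\<in>e. ((snd w)(i := - snd w i)) k))
      = (\<Sum>e\<in>E. thE e * prod (snd w) e - (if i \<in> e then 2 * (thE e * prod (snd w) e) else 0))"
    by (rule sum.cong[OF refl])
  also have "\<dots> = (\<Sum>e\<in>E. thE e * prod (snd w) e) - 2 * (\<Sum>e\<in>{e\<in>E. i \<in> e}. thE e * prod (snd w) e)"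
    using E by (simp add: sum_subtractf sum.inter_filter sum_distrib_left if_distrib[of "(*) 2"])
  finally show ?thesis
    using sources unfolding ising_energy_def flip_source_def by simp
qed

lemma mult_exp_diff_pos:
  fixes s u v :: real
  assumes "s \<in> {-1, 1}" and "0 < s * (u - v)"
  shows "0 < s * (exp u - exp v)"
  using assms by auto

lemma exp_alternating_sum_pos:
  fixes a b q :: real
  assumes "0 < a" "0 < b" "0 \<le> q"
  shows "0 < exp (a + b + q) - exp (- a + b - q) + exp (a - b - q) - exp (- a - b + q)"
proof -
  define A B T where "A = exp (2 * a)" and "B = exp (2 * b)" and "T = exp (2 * q)"
  have "1 < A" "1 < B" "1 \<le> T"
    using assms by (simp_all add: A_def B_def T_def)
  then have "1 * (A * B - 1) \<le> T * (A * B - 1)"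
    by (intro mult_right_mono) (auto simp: less_1_mult less_imp_le)
  moreover have "0 < (A - 1) * (B + 1)"
    using \<open>1 < A\<close> \<open>1 < B\<close> by simp
  ultimately have "0 < A * B * T - B + A - T"
    by (simp add: algebra_simps)
  also have "A * B * T - B + A - T
      = exp (a + b + q) * (exp (a + b + q) - exp (- a + b - q) + exp (a - b - q) - exp (- a - b + q))"
    unfolding A_def B_def T_def by (simp add: algebra_simps exp_add[symmetric])
  finally show ?thesis
    by (simp add: zero_less_mult_iff)
qed

lemma exp_flip_orbit_pos:
  fixes a b q s t x :: real
  assumes "0 < a" "0 < b" "0 \<le> q" and st: "s \<in> {-1, 1}" "t \<in> {-1, 1}"
  shows "0 < s * (exp x - exp (x - 2 * a * s - 2 * q * (s * t))
    + exp (x - 2 * b * t - 2 * q * (s * t)) - exp (x - 2 * b * t - 2 * a * s))"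
proof -
  define c where "c = x - a * s - b * t - q * (s * t)"
  have "s * (exp x - exp (x - 2 * a * s - 2 * q * (s * t))
      + exp (x - 2 * b * t - 2 * q * (s * t)) - exp (x - 2 * b * t - 2 * a * s))
    = exp c * (exp (a + b + q) - exp (- a + b - q) + exp (a - b - q) - exp (- a - b + q))"
    using st unfolding c_def by (auto simp: exp_add[symmetric] algebra_simps)
  then show ?thesis
    using exp_alternating_sum_pos[OF assms(1-3)] by simp
qed

lemma ising_acc_pos_isolated:
  assumes E: "finite E" "\<forall>e\<in>E. finite e" and i: "i < m"
    and isolated: "\<forall>e\<in>E. i \<notin> e" and th: "0 < th i"
  shows "0 < ising_acc m thY th thE E i"
proof -
  define f where "f w = exp (ising_energy m thY th thE E w) * (snd w i * fst w)" for w
  from isolated have no_edges: "{e\<in>E. i \<in> e} = {}"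
    by auto
  have "0 < (\<Sum>w\<in>ising_space m. f w + f (flip_source i w))"
  proof (intro sum_pos ising_space_finite ising_space_nonempty)
    fix w assume w: "w \<in> ising_space m"
    define s where "s = snd w i * fst w"
    have s: "s \<in> {-1, 1}"
      using ising_space_label[OF w] ising_space_source[OF w i] by (auto simp: s_def)
    have "f w + f (flip_source i w) = s * (exp (ising_energy m thY th thE E w)
        - exp (ising_energy m thY th thE E w - 2 * th i * s))"
      unfolding f_def s_def ising_energy_flip_source[OF E i] no_edges
      by (simp add: flip_source_def algebra_simps)
    also have "\<dots> > 0"
      using th s by (intro mult_exp_diff_pos) auto
    finally show "0 < f w + f (flip_source i w)" .
  qed
  also have "\<dots> = 2 * sum f (ising_space m)"
    unfolding sum.distrib sum_flip_source[OF i] by simp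
  finally show ?thesis
    unfolding ising_acc_def f_def by (intro ising_expect_pos) simp
qed

lemma ising_acc_pos_paired:
  assumes E: "finite E" "\<forall>e\<in>E. finite e" and i: "i < m" and p: "p < m" and "i \<noteq> p"
    and edges_i: "{e\<in>E. i \<in> e} = {{i, p}}" and edges_p: "{e\<in>E. p \<in> e} = {{i, p}}"
    and th: "0 < th i" "0 < th p" and thE: "0 \<le> thE {i, p}"
  shows "0 < ising_acc m thY th thE E i"
proof -
  define f where "f w = exp (ising_energy m thY th thE E w) * (snd w i * fst w)" for w
  let ?orbit = "\<lambda>w. f w + f (flip_source i w) + f (flip_source p w)
    + f (flip_source i (flip_source p w))"
  have "0 < (\<Sum>w\<in>ising_space m. ?orbit w)"
  proof (intro sum_pos ising_space_finite ising_space_nonempty)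
    fix w assume w: "w \<in> ising_space m"
    define x where "x = ising_energy m thY th thE E w"
    define s t where "s = snd w i * fst w" and "t = snd w p * fst w"
    have Y: "fst w \<in> {-1, 1}"
      using ising_space_label[OF w] .
    have st: "s \<in> {-1, 1}" "t \<in> {-1, 1}" "snd w i * snd w p = s * t"
      using Y ising_space_source[OF w i] ising_space_source[OF w p] by (auto simp: s_def t_def)
    have energy_i: "ising_energy m thY th thE E (flip_source i w) = x - 2 * th i * s - 2 * thE {i, p} * (s * t)"
      using \<open>i \<noteq> p\<close>
      by (simp add: ising_energy_flip_source[OF E i] edges_i x_def st(3) s_def[symmetric] mult.assoc)
    have energy_p: "ising_energy m thY th thE E (flip_source p w) = x - 2 * th p * t - 2 * thE {i, p} * (s * t)"
      using \<open>i \<noteq> p\<close>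
      by (simp add: ising_energy_flip_source[OF E p] edges_p x_def st(3) t_def[symmetric] mult.assoc)
    have "snd (flip_source p w) i * fst (flip_source p w) = s"
      and "prod (snd (flip_source p w)) {i, p} = - (s * t)"
      using \<open>i \<noteq> p\<close> st(3) by (simp_all add: flip_source_def s_def)
    then have energy_ip: "ising_energy m thY th thE E (flip_source i (flip_source p w))
        = x - 2 * th p * t - 2 * th i * s"
      by (simp add: ising_energy_flip_source[OF E i] edges_i energy_p mult.assoc)
    have "?orbit w = s * (exp x - exp (x - 2 * th i * s - 2 * thE {i, p} * (s * t))
        + exp (x - 2 * th p * t - 2 * thE {i, p} * (s * t)) - exp (x - 2 * th p * t - 2 * th i * s))"
      unfolding f_def energy_i energy_p energy_ip using \<open>i \<noteq> p\<close>
      by (simp add: flip_source_def x_def s_def algebra_simps)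
    also have "\<dots> > 0"
      by (rule exp_flip_orbit_pos[OF th thE st(1,2)])
    finally show "0 < ?orbit w" .
  qed
  also have "\<dots> = 4 * sum f (ising_space m)"
    unfolding sum.distrib sum_flip_source[OF i] sum_flip_source[OF p, where f = "\<lambda>w. f (flip_source i w)"]
      sum_flip_source[OF p] by simp
  finally show ?thesis
    unfolding ising_acc_def f_def by (intro ising_expect_pos) simp
qed

section \<open>Two square-root estimates\<close>

lemma sqrt_ratio_deficit_bounds:
  fixes A b c x eps :: real
  assumes eps: "0 < eps" and b: "0 < b" "b \<le> x + eps" and M: "x + eps \<le> 1"
    and c: "0 < c" "c\<^sup>2 \<le> x" and A: "b \<le> A" "A \<le> 1"
  shows "- (eps / (2 * b\<^sup>2 * c\<^sup>2)) \<le> A * sqrt (x / (x + eps)) - A"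
    and "A * sqrt (x / (x + eps)) - A \<le> - (eps * b\<^sup>2 / 2)"
proof -
  define M u where "M = x + eps" and "u = sqrt (x / M)"
  have "0 < x"
    using c zero_less_power[of c 2] by linarith
  have "0 < M" "M \<le> 1" "b \<le> 1" "0 < A"
    using b M A by (auto simp: M_def)
  have "u \<le> 1"
    using \<open>0 < x\<close> eps by (simp add: u_def M_def)
  have "x \<le> x / M"
    using \<open>0 < x\<close> \<open>0 < M\<close> \<open>M \<le> 1\<close> by (simp add: le_divide_eq mult_le_cancel_left1)
  then have "c \<le> u"
    unfolding u_def using c by (intro real_le_rsqrt) simp
  have "u\<^sup>2 = x / M"
    using \<open>0 < x\<close> \<open>0 < M\<close> by (simp add: u_def)
  then have "(1 - u) * (M * (1 + u)) = eps"
    using \<open>0 < M\<close> by (simp add: power2_eq_square field_simps M_def)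
  then have "A * (1 - u) = A * eps / (M * (1 + u))"
    using \<open>c \<le> u\<close> c(1) \<open>0 < M\<close> by (simp add: eq_divide_eq mult.assoc)
  then have gap: "A * sqrt (x / (x + eps)) - A = - (A * eps / (M * (1 + u)))"
    by (simp add: u_def M_def algebra_simps)
  have "b * eps / 2 \<le> A * eps / (M * (1 + u))"
  proof (rule frac_le)
    show "M * (1 + u) \<le> 2"
      using \<open>M \<le> 1\<close> \<open>u \<le> 1\<close> \<open>c \<le> u\<close> c(1) mult_mono[of M 1 "1 + u" 2] by simp
  qed (use A \<open>0 < A\<close> eps \<open>0 < M\<close> \<open>c \<le> u\<close> c(1) in auto)
  moreover have "eps * b\<^sup>2 / 2 \<le> b * eps / 2"
    using b \<open>b \<le> 1\<close> eps by (simp add: power2_eq_square mult_le_cancel_left1)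
  ultimately show "A * sqrt (x / (x + eps)) - A \<le> - (eps * b\<^sup>2 / 2)"
    unfolding gap by simp
  have "A * eps / (M * (1 + u)) \<le> eps / (b * (1 + c))"
  proof (rule frac_le)
    show "b * (1 + c) \<le> M * (1 + u)"
      using b \<open>c \<le> u\<close> c(1) by (intro mult_mono) (auto simp: M_def)
  qed (use A eps b c in auto)
  also have "\<dots> \<le> eps / (2 * b\<^sup>2 * c\<^sup>2)"
  proof (rule divide_left_mono)
    have "c \<le> 1"
      using \<open>c \<le> u\<close> \<open>u \<le> 1\<close> by simp
    then have "b * c\<^sup>2 \<le> c"
      using \<open>b \<le> 1\<close> b c(1) by (simp add: power2_eq_square mult_le_one mult_left_le_one_le)
    then have "2 * (b * c\<^sup>2) \<le> 1 + c"
      using \<open>c \<le> 1\<close> by linarith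
    then show "2 * b\<^sup>2 * c\<^sup>2 \<le> b * (1 + c)"
      using b mult_left_mono[of "2 * (b * c\<^sup>2)" "1 + c" b] by (simp add: power2_eq_square algebra_simps)
  qed (use eps b c in auto)
  finally show "- (eps / (2 * b\<^sup>2 * c\<^sup>2)) \<le> A * sqrt (x / (x + eps)) - A"
    unfolding gap by simp
qed

lemma sqrt_ratio_excess_bounds:
  fixes A P b c eps :: real
  assumes eps: "0 < eps" and b: "0 < b" "b \<le> A" "b \<le> P" and c: "0 < c" "c \<le> P"
    and le_1: "A \<le> 1" "P \<le> 1" "A * P + eps \<le> 1"
  shows "eps * b / 2 \<le> A * sqrt ((A * P + eps) / (A * P)) - A"
    and "A * sqrt ((A * P + eps) / (A * P)) - A \<le> eps / (2 * b * c)"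
proof -
  define v where "v = sqrt ((A * P + eps) / (A * P))"
  have "0 < A" "0 < P" "b \<le> 1"
    using b le_1 by auto
  have "1 \<le> v"
    using \<open>0 < A\<close> \<open>0 < P\<close> eps by (simp add: v_def)
  have "v\<^sup>2 = (A * P + eps) / (A * P)"
    using \<open>0 < A\<close> \<open>0 < P\<close> eps by (simp add: v_def)
  then have "A * P * v\<^sup>2 = A * P + eps"
    using \<open>0 < A\<close> \<open>0 < P\<close> by simp
  then have "(A * v - A) * (P * (v + 1)) = eps"
    by (simp add: power2_eq_square algebra_simps)
  then have gap: "A * v - A = eps / (P * (v + 1))"
    using \<open>0 < P\<close> \<open>1 \<le> v\<close> by (simp add: eq_divide_eq)
  have "b\<^sup>2 \<le> A * P"
    using b mult_mono[of b A b P] by (simp add: power2_eq_square)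
  then have "(A * P + eps) / (A * P) \<le> 1 / b\<^sup>2"
    using le_1(3) b(1) \<open>0 < A\<close> \<open>0 < P\<close> eps by (intro frac_le) auto
  then have "v \<le> 1 / b"
    unfolding v_def using real_sqrt_le_mono b(1) by (fastforce simp: real_sqrt_divide)
  moreover have "1 \<le> 1 / b"
    using \<open>b \<le> 1\<close> b(1) by simp
  ultimately have "v + 1 \<le> 2 / b"
    by (simp add: field_simps)
  then have "P * (v + 1) \<le> 1 * (2 / b)"
    using le_1(2) \<open>0 < P\<close> \<open>1 \<le> v\<close> by (intro mult_mono) auto
  then have "eps / (2 / b) \<le> eps / (P * (v + 1))"
    using eps b(1) \<open>0 < P\<close> \<open>1 \<le> v\<close> by (intro divide_left_mono) auto
  then show "eps * b / 2 \<le> A * sqrt ((A * P + eps) / (A * P)) - A"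
    using gap by (simp add: v_def)
  have "b * c \<le> 1 * P"
    using \<open>b \<le> 1\<close> b(1) c by (intro mult_mono) auto
  then have "2 * b * c \<le> P * (v + 1)"
    using mult_mono[of 2 "v + 1" "b * c" P] \<open>1 \<le> v\<close> b(1) c(1) by (simp add: mult_ac)
  then have "eps / (P * (v + 1)) \<le> eps / (2 * b * c)"
    using eps b(1) c(1) \<open>0 < P\<close> \<open>1 \<le> v\<close> by (intro divide_left_mono) auto
  then show "A * sqrt ((A * P + eps) / (A * P)) - A \<le> eps / (2 * b * c)"
    using gap by (simp add: v_def)
qed

section \<open>Counting pairs of sources\<close>

lemma card_ordered_doubletons:
  fixes A :: "'a :: linorder set set"
  assumes "\<And>B. B \<in> A \<Longrightarrow> card B = 2"
  shows "card {(j, k). j < k \<and> {j, k} \<in> A} = card A"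
proof -
  have inj: "inj_on (\<lambda>(j, k). {j, k}) {(j, k). j < k \<and> {j, k} \<in> A}"
    by (auto simp: inj_on_def doubleton_eq_iff)
  have "(\<lambda>(j, k). {j, k}) ` {(j, k). j < k \<and> {j, k} \<in> A} = A"
  proof (intro equalityI subsetI)
    fix B assume "B \<in> A"
    then obtain x y where "B = {x, y}" "x \<noteq> y"
      using assms by (meson card_2_iff)
    then have "B = {min x y, max x y}" "min x y < max x y"
      by (auto simp: min_def max_def)
    with \<open>B \<in> A\<close> show "B \<in> (\<lambda>(j, k). {j, k}) ` {(j, k). j < k \<and> {j, k} \<in> A}"
      by (auto intro!: image_eqI[of _ _ "(min x y, max x y)"])
  qed auto
  with card_image[OF inj] show ?thesis
    by simp
qed

lemma finite_other_pairs: "finite (other_pairs m i)"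
  by (rule finite_subset[of _ "{..<m} \<times> {..<m}"]) (auto simp: other_pairs_def)

lemma card_other_pairs:
  assumes "i < m"
  shows "real (card (other_pairs m i)) = (real m - 1) * (real m - 2) / 2"
proof -
  have pairs: "other_pairs m i = {(j, k). j < k \<and> {j, k} \<in> {B. B \<subseteq> {0..<m} - {i} \<and> card B = 2}}"
    by (auto simp: other_pairs_def)
  have "card (other_pairs m i) = card {B. B \<subseteq> {0..<m} - {i} \<and> card B = 2}"
    unfolding pairs by (rule card_ordered_doubletons) simp
  also have "\<dots> = (m - 1) choose 2"
    using assms by (simp add: n_subsets)
  finally have "card (other_pairs m i) = (m - 1) choose 2" .
  moreover have "2 * ((m - 1) choose 2) = (m - 1) * (m - 2)"
    by (simp add: choose_two) arith
  ultimately have "2 * real (card (other_pairs m i)) = real (m - 1) * real (m - 2)"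
    by (simp flip: of_nat_mult)
  then show ?thesis
    using assms by (cases "m = 1") (auto simp: of_nat_diff)
qed

section \<open>The averaged triplet estimate\<close>

locale ising_pairwise =
  fixes m :: nat and thY :: real and th :: "nat \<Rightarrow> real"
    and thE :: "nat set \<Rightarrow> real" and E :: "nat set set"
  assumes m_ge_3: "m \<ge> 3"
    and E_pairs: "\<forall>e\<in>E. e \<subseteq> {0..<m} \<and> card e = 2"
    and E_disj: "\<forall>e\<in>E. \<forall>e'\<in>E. e \<noteq> e' \<longrightarrow> e \<inter> e' = {}"
    and th_pos: "\<forall>j<m. th j > 0"
    and thE_pos: "\<forall>e\<in>E. thE e > 0"
begin

abbreviation acc :: "nat \<Rightarrow> real" where "acc \<equiv> ising_acc m thY th thE E"
abbreviation mom :: "nat \<Rightarrow> nat \<Rightarrow> real" where "mom \<equiv> ising_mom m thY th thE E"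
abbreviation amin :: real where "amin \<equiv> ising_amin m thY th thE E"

lemma finite_E: "finite E"
  using E_pairs by (intro finite_subset[of E "Pow {0..<m}"]) auto

lemma card_edge: "e \<in> E \<Longrightarrow> card e = 2"
  using E_pairs by auto

lemma finite_edge: "e \<in> E \<Longrightarrow> finite e"
  using card_edge card.infinite by fastforce

lemma edge_less: "{j, k} \<in> E \<Longrightarrow> j < m \<and> k < m"
  using E_pairs by auto

lemma edge_neq: "{j, k} \<in> E \<Longrightarrow> j \<noteq> k"
  using card_edge by fastforce

lemma edge_eqI: "e \<in> E \<Longrightarrow> e' \<in> E \<Longrightarrow> x \<in> e \<Longrightarrow> x \<in> e' \<Longrightarrow> e = e'"
  using E_disj by blast

lemma edge_partner:
  assumes "e \<in> E" "j \<in> e"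
  obtains p where "e = {j, p}" "j \<noteq> p"
  using assms card_edge[OF assms(1)] by (auto simp: card_2_iff)

lemma partner_unique: "{j, k} \<in> E \<Longrightarrow> {j, q} \<in> E \<Longrightarrow> q = k"
  using edge_eqI[of "{j, k}" "{j, q}" j] edge_neq by (auto simp: doubleton_eq_iff)

lemma edges_containing: "{j, p} \<in> E \<Longrightarrow> {e\<in>E. j \<in> e} = {{j, p}}"
  using edge_eqI by blast

lemma mom_commute: "mom j k = mom k j"
  unfolding ising_mom_def by (simp add: mult.commute)

lemma mom_le_1: "j < m \<Longrightarrow> k < m \<Longrightarrow> mom j k \<le> 1"
  unfolding ising_mom_def
  using ising_space_source[of _ m j] ising_space_source[of _ m k] by (intro ising_expect_le_1) fastforce

lemma acc_le_1: "j < m \<Longrightarrow> acc j \<le> 1"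
  unfolding ising_acc_def
  using ising_space_source[of _ m j] ising_space_label[of _ m] by (intro ising_expect_le_1) fastforce

lemma mom_eq_acc_mult:
  assumes k: "k < m" "k \<noteq> j" and unlinked: "{j, k} \<notin> E"
  shows "mom j k = acc j * acc k"
proof -
  define C where "C = insert j {l. {j, l} \<in> E}"
  have "e \<subseteq> {0..<m} - C \<or> e \<inter> ({0..<m} - C) = {}" if e: "e \<in> E" for e
  proof (cases "j \<in> e")
    case True
    with e obtain p where "e = {j, p}"
      by (metis edge_partner)
    with e show ?thesis
      by (auto simp: C_def)
  next
    case False
    have "l \<notin> C" if "l \<in> e" for l
      using edge_eqI[OF e _ \<open>l \<in> e\<close>, of "{j, l}"] False \<open>l \<in> e\<close> by (auto simp: C_def)
    with e E_pairs show ?thesis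
      by blast
  qed
  moreover have "j \<notin> {0..<m} - C" "k \<in> {0..<m} - C"
    using k unlinked by (auto simp: C_def insert_commute)
  ultimately show ?thesis
    using card_edge by (intro ising_mom_eq_acc_mult[of E "{0..<m} - C"]) auto
qed

lemma acc_pos:
  assumes "j < m"
  shows "0 < acc j"
proof (cases "\<exists>e\<in>E. j \<in> e")
  case True
  then obtain p where jp: "{j, p} \<in> E" "j \<noteq> p"
    by (metis edge_partner)
  have "{e\<in>E. p \<in> e} = {{j, p}}"
    using edges_containing[of p j] jp(1) by (simp add: insert_commute)
  moreover have "0 < th j" "0 < th p" "0 \<le> thE {j, p}"
    using assms th_pos thE_pos jp(1) edge_less[OF jp(1)] by (auto simp: less_imp_le)
  ultimately show ?thesis
    using finite_E finite_edge assms edge_less[OF jp(1)] jp(2) edges_containing[OF jp(1)]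
    by (intro ising_acc_pos_paired[where p = p]) auto
next
  case False
  then show ?thesis
    using assms th_pos finite_E finite_edge by (intro ising_acc_pos_isolated) auto
qed

lemma exists_unlinked: "\<exists>k<m. k \<noteq> j \<and> {j, k} \<notin> E"
proof -
  define k1 k2 :: nat where "k1 = (if j = 0 then 1 else 0)" and "k2 = (if j = 2 then 1 else 2)"
  have "k1 < m" "k2 < m" "k1 \<noteq> j" "k2 \<noteq> j" "k1 \<noteq> k2"
    using m_ge_3 by (auto simp: k1_def k2_def)
  then show ?thesis
    using partner_unique[of j k1 k2] by blast
qed

lemma amin_le_acc: "j < m \<Longrightarrow> amin \<le> acc j"
  unfolding ising_amin_def by (rule Min_le) auto

lemma amin_pos: "0 < amin"
proof -
  have "amin \<in> acc ` {0..<m}"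
    unfolding ising_amin_def using m_ge_3 by (intro Min_in) auto
  then show ?thesis
    using acc_pos by auto
qed

definition triplet :: "nat \<Rightarrow> nat \<Rightarrow> nat \<Rightarrow> real" where
  "triplet i j k = sqrt (mom i j * mom i k / mom j k)"

lemma triplet_commute: "triplet i j k = triplet i k j"
  unfolding triplet_def by (simp add: mom_commute mult.commute)

lemma abar_minus_acc_eq_average:
  assumes "i < m"
  shows "ising_abar m thY th thE E i - acc i
    = (\<Sum>(j, k)\<in>other_pairs m i. triplet i j k - acc i) / real (card (other_pairs m i))"
proof -
  have "0 < (real m - 1) * (real m - 2)"
    using m_ge_3 by (intro mult_pos_pos) auto
  then have "0 < real (card (other_pairs m i))"
    using card_other_pairs[OF assms] by simp
  then show ?thesis
    unfolding ising_abar_def triplet_def by (simp add: sum_subtractf case_prod_beta field_simps)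
qed

lemma triplet_unlinked:
  assumes "i < m" "j < m" "k < m" "i \<noteq> j" "i \<noteq> k" "j \<noteq> k"
    and "{i, j} \<notin> E" "{i, k} \<notin> E" "{j, k} \<notin> E"
  shows "triplet i j k = acc i"
proof -
  have "triplet i j k = sqrt (acc i * acc i)"
    unfolding triplet_def using assms acc_pos[of j] acc_pos[of k]
    by (simp add: mom_eq_acc_mult field_simps)
  then show ?thesis
    using acc_pos[OF assms(1)] by simp
qed

definition partner_pairs :: "nat \<Rightarrow> (nat \<times> nat) set" where
  "partner_pairs i = {(j, k) \<in> other_pairs m i. {i, j} \<in> E \<or> {i, k} \<in> E}"

definition edge_pairs :: "nat \<Rightarrow> (nat \<times> nat) set" where
  "edge_pairs i = {(j, k) \<in> other_pairs m i. {j, k} \<in> E}"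

lemma sum_other_pairs_split:
  assumes "i < m"
  shows "(\<Sum>(j, k)\<in>other_pairs m i. triplet i j k - acc i)
    = (\<Sum>(j, k)\<in>partner_pairs i. triplet i j k - acc i) + (\<Sum>(j, k)\<in>edge_pairs i. triplet i j k - acc i)"
proof -
  have disjoint: "partner_pairs i \<inter> edge_pairs i = {}"
    using edge_eqI by (fastforce simp: partner_pairs_def edge_pairs_def other_pairs_def)
  have sub: "partner_pairs i \<subseteq> other_pairs m i" "edge_pairs i \<subseteq> other_pairs m i"
    by (auto simp: partner_pairs_def edge_pairs_def)
  then have finite: "finite (partner_pairs i)" "finite (edge_pairs i)"
    using finite_other_pairs finite_subset by blast+
  have "triplet i j k - acc i = 0"
    if jk: "(j, k) \<in> other_pairs m i" "(j, k) \<notin> partner_pairs i" "(j, k) \<notin> edge_pairs i" for j k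
  proof -
    have "j < k" "k < m" "j \<noteq> i" "k \<noteq> i"
      using jk(1) by (auto simp: other_pairs_def)
    moreover have "{i, j} \<notin> E" "{i, k} \<notin> E" "{j, k} \<notin> E"
      using jk by (auto simp: partner_pairs_def edge_pairs_def)
    ultimately show ?thesis
      using assms triplet_unlinked by simp
  qed
  then have "(\<Sum>(j, k)\<in>other_pairs m i. triplet i j k - acc i)
      = (\<Sum>(j, k)\<in>partner_pairs i \<union> edge_pairs i. triplet i j k - acc i)"
    using sub finite_other_pairs by (intro sum.mono_neutral_right) fastforce+
  also have "\<dots> = (\<Sum>(j, k)\<in>partner_pairs i. triplet i j k - acc i)
      + (\<Sum>(j, k)\<in>edge_pairs i. triplet i j k - acc i)"
    using finite disjoint by (rule sum.union_disjoint)
  finally show ?thesis .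
qed

lemma card_edge_pairs: "card (edge_pairs i) = card {e\<in>E. i \<notin> e}"
proof -
  have pairs: "edge_pairs i = {(j, k). j < k \<and> {j, k} \<in> {e\<in>E. i \<notin> e}}"
    using edge_less by (auto simp: edge_pairs_def other_pairs_def)
  show ?thesis
    unfolding pairs by (rule card_ordered_doubletons) (simp add: card_edge)
qed

lemma card_partner_pairs:
  assumes ip: "{i, p} \<in> E"
  shows "card (partner_pairs i) = m - 2"
proof -
  have "i \<noteq> p" "i < m" "p < m"
    using edge_neq[OF ip] edge_less[OF ip] by auto
  have "{i, j} \<in> E \<longleftrightarrow> j = p" for j
    using partner_unique[OF ip, of j] ip by blast
  then have "partner_pairs i = {(j, k). j < k \<and> k < m \<and> j \<noteq> i \<and> k \<noteq> i \<and> (j = p \<or> k = p)}"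
    by (auto simp: partner_pairs_def other_pairs_def)
  also have "\<dots> = (\<lambda>q. (min p q, max p q)) ` ({0..<m} - {i, p})"
  proof (intro equalityI subsetI)
    fix x assume "x \<in> {(j, k). j < k \<and> k < m \<and> j \<noteq> i \<and> k \<noteq> i \<and> (j = p \<or> k = p)}"
    then obtain j k where x: "x = (j, k)" "j < k" "k < m" "j \<noteq> i" "k \<noteq> i" "j = p \<or> k = p"
      by auto
    then show "x \<in> (\<lambda>q. (min p q, max p q)) ` ({0..<m} - {i, p})"
      by (elim disjE) (auto intro: image_eqI[of _ _ k] image_eqI[of _ _ j])
  qed (use \<open>p < m\<close> \<open>i \<noteq> p\<close> in \<open>auto simp: min_def max_def split: if_splits\<close>)
  moreover have "inj_on (\<lambda>q. (min p q, max p q)) ({0..<m} - {i, p})"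
    by (auto simp: inj_on_def min_def max_def split: if_splits)
  ultimately have "card (partner_pairs i) = card ({0..<m} - {i, p})"
    by (simp add: card_image)
  also have "\<dots> = m - 2"
    using \<open>i \<noteq> p\<close> \<open>i < m\<close> \<open>p < m\<close> by (subst card_Diff_subset) auto
  finally show ?thesis .
qed

end

locale ising_pairwise_bounds = ising_pairwise +
  fixes bmin epsmin epsmax :: real
  assumes bmin_pos: "0 < bmin"
    and bmin_le_mom: "\<forall>j<m. \<forall>k<m. j \<noteq> k \<longrightarrow> bmin \<le> mom j k"
    and epsmin_pos: "0 < epsmin"
    and eps_bounds: "\<forall>j k. {j, k} \<in> E \<longrightarrow>
      epsmin \<le> mom j k - acc j * acc k \<and> mom j k - acc j * acc k \<le> epsmax"
begin

lemma bmin_le_acc: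
  assumes "j < m"
  shows "bmin \<le> acc j"
proof -
  obtain k where k: "k < m" "k \<noteq> j" "{j, k} \<notin> E"
    using exists_unlinked by blast
  then have "bmin \<le> mom j k"
    using assms bmin_le_mom by simp
  also have "\<dots> = acc j * acc k"
    using k by (rule mom_eq_acc_mult)
  also have "\<dots> \<le> acc j"
    using acc_pos[OF assms] acc_le_1[OF k(1)] by (simp add: mult_left_le)
  finally show ?thesis .
qed

lemma triplet_across_edge_bounds:
  assumes i: "i < m" and jk: "{j, k} \<in> E" and "i \<noteq> j" "i \<noteq> k"
  shows "- (epsmax / (2 * bmin\<^sup>2 * amin\<^sup>2)) \<le> triplet i j k - acc i"
    and "triplet i j k - acc i \<le> - (epsmin * bmin\<^sup>2 / 2)"
proof -
  define x eps where "x = acc j * acc k" and "eps = mom j k - acc j * acc k"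
  have "j < m" "k < m" "j \<noteq> k"
    using edge_less[OF jk] edge_neq[OF jk] by auto
  have "{i, j} \<notin> E" "{i, k} \<notin> E"
    using edge_eqI[OF jk, of "{i, j}" j] edge_eqI[OF jk, of "{i, k}" k] assms(3,4) by auto
  then have "triplet i j k = sqrt (acc i * acc i * (x / (x + eps)))"
    unfolding triplet_def x_def eps_def using assms \<open>j < m\<close> \<open>k < m\<close>
    by (simp add: mom_eq_acc_mult algebra_simps)
  then have triplet: "triplet i j k = acc i * sqrt (x / (x + eps))"
    using acc_pos[OF i] by (simp only: real_sqrt_mult real_sqrt_mult_self abs_of_pos)
  have eps: "epsmin \<le> eps" "eps \<le> epsmax"
    using eps_bounds jk by (auto simp: eps_def)
  have "amin\<^sup>2 \<le> x"
    unfolding x_def power2_eq_square using amin_pos amin_le_acc acc_pos \<open>j < m\<close> \<open>k < m\<close>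
    by (intro mult_mono) (auto simp: less_imp_le)
  moreover have "bmin \<le> x + eps" "x + eps \<le> 1"
    using bmin_le_mom mom_le_1 \<open>j < m\<close> \<open>k < m\<close> \<open>j \<noteq> k\<close> by (auto simp: x_def eps_def)
  ultimately have deficit: "- (eps / (2 * bmin\<^sup>2 * amin\<^sup>2)) \<le> triplet i j k - acc i"
      "triplet i j k - acc i \<le> - (eps * bmin\<^sup>2 / 2)"
    unfolding triplet using sqrt_ratio_deficit_bounds[of eps bmin x amin "acc i"]
      eps epsmin_pos bmin_pos amin_pos bmin_le_acc[OF i] acc_le_1[OF i] by auto
  have "- (epsmax / (2 * bmin\<^sup>2 * amin\<^sup>2)) \<le> - (eps / (2 * bmin\<^sup>2 * amin\<^sup>2))"
    using eps bmin_pos amin_pos by (simp add: divide_right_mono)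
  with deficit(1) show "- (epsmax / (2 * bmin\<^sup>2 * amin\<^sup>2)) \<le> triplet i j k - acc i"
    by linarith
  have "- (eps * bmin\<^sup>2 / 2) \<le> - (epsmin * bmin\<^sup>2 / 2)"
    using eps by (simp add: mult_right_mono)
  with deficit(2) show "triplet i j k - acc i \<le> - (epsmin * bmin\<^sup>2 / 2)"
    by linarith
qed

lemma triplet_through_partner_bounds:
  assumes ip: "{i, p} \<in> E" and q: "q < m" "q \<noteq> i" "q \<noteq> p"
  shows "epsmin * bmin / 2 \<le> triplet i p q - acc i"
    and "triplet i p q - acc i \<le> epsmax / (2 * bmin * amin)"
proof -
  define A P eps where "A = acc i" and "P = acc p" and "eps = mom i p - acc i * acc p"
  have "i < m" "p < m" "i \<noteq> p"
    using edge_less[OF ip] edge_neq[OF ip] by auto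
  have "{i, q} \<notin> E" "{p, q} \<notin> E"
    using partner_unique[OF ip, of q] edge_eqI[OF ip, of "{p, q}" p] q by auto
  then have "triplet i p q = sqrt ((A * P + eps) * (A * acc q) / (P * acc q))"
    unfolding triplet_def A_def P_def eps_def using q \<open>i < m\<close> \<open>p < m\<close>
    by (simp add: mom_eq_acc_mult mom_commute[of q])
  also have "\<dots> = sqrt (A * A * ((A * P + eps) / (A * P)))"
    using acc_pos[OF q(1)] acc_pos[OF \<open>i < m\<close>] acc_pos[OF \<open>p < m\<close>] by (simp add: A_def P_def field_simps)
  finally have triplet: "triplet i p q = A * sqrt ((A * P + eps) / (A * P))"
    using acc_pos[OF \<open>i < m\<close>] unfolding A_def by (simp only: real_sqrt_mult real_sqrt_mult_self abs_of_pos)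
  have eps: "epsmin \<le> eps" "eps \<le> epsmax"
    using eps_bounds ip by (auto simp: eps_def)
  have "A * P + eps \<le> 1"
    using mom_le_1 \<open>i < m\<close> \<open>p < m\<close> by (simp add: A_def P_def eps_def)
  then have excess: "eps * bmin / 2 \<le> triplet i p q - acc i"
      "triplet i p q - acc i \<le> eps / (2 * bmin * amin)"
    unfolding triplet using sqrt_ratio_excess_bounds[of eps bmin A P amin] eps epsmin_pos bmin_pos amin_pos
      bmin_le_acc acc_le_1 amin_le_acc \<open>i < m\<close> \<open>p < m\<close> by (auto simp: A_def P_def)
  have "epsmin * bmin / 2 \<le> eps * bmin / 2"
    using eps bmin_pos by (simp add: mult_right_mono)
  with excess(1) show "epsmin * bmin / 2 \<le> triplet i p q - acc i"
    by linarith
  have "eps / (2 * bmin * amin) \<le> epsmax / (2 * bmin * amin)"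
    using eps bmin_pos amin_pos by (simp add: divide_right_mono)
  with excess(2) show "triplet i p q - acc i \<le> epsmax / (2 * bmin * amin)"
    by linarith
qed


lemma sum_edge_pairs_bounds:
  assumes "i < m"
  shows "real (card {e\<in>E. i \<notin> e}) * - (epsmax / (2 * bmin\<^sup>2 * amin\<^sup>2))
      \<le> (\<Sum>(j, k)\<in>edge_pairs i. triplet i j k - acc i)"
    and "(\<Sum>(j, k)\<in>edge_pairs i. triplet i j k - acc i)
      \<le> real (card {e\<in>E. i \<notin> e}) * - (epsmin * bmin\<^sup>2 / 2)"
proof -
  have bounds: "- (epsmax / (2 * bmin\<^sup>2 * amin\<^sup>2)) \<le> triplet i j k - acc i"
    "triplet i j k - acc i \<le> - (epsmin * bmin\<^sup>2 / 2)" if "(j, k) \<in> edge_pairs i" for j k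
    using that triplet_across_edge_bounds[OF assms] by (auto simp: edge_pairs_def other_pairs_def)
  show "real (card {e\<in>E. i \<notin> e}) * - (epsmax / (2 * bmin\<^sup>2 * amin\<^sup>2))
      \<le> (\<Sum>(j, k)\<in>edge_pairs i. triplet i j k - acc i)"
    unfolding card_edge_pairs[symmetric] by (rule sum_bounded_below) (use bounds in auto)
  show "(\<Sum>(j, k)\<in>edge_pairs i. triplet i j k - acc i)
      \<le> real (card {e\<in>E. i \<notin> e}) * - (epsmin * bmin\<^sup>2 / 2)"
    unfolding card_edge_pairs[symmetric] by (rule sum_bounded_above) (use bounds in auto)
qed

lemma partner_pairs_triplet:
  assumes ip: "{i, p} \<in> E" and "(j, k) \<in> partner_pairs i"
  obtains q where "q < m" "q \<noteq> i" "q \<noteq> p" "triplet i j k = triplet i p q"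
proof -
  have jk: "j < k" "k < m" "j \<noteq> i" "k \<noteq> i" "{i, j} \<in> E \<or> {i, k} \<in> E"
    using assms(2) by (auto simp: partner_pairs_def other_pairs_def)
  show ?thesis
  proof (cases "{i, j} \<in> E")
    case True
    then have "j = p"
      using partner_unique[OF ip] by blast
    with jk show ?thesis
      by (intro that[of k]) auto
  next
    case False
    then have "k = p"
      using jk(5) partner_unique[OF ip] by blast
    with jk show ?thesis
      by (intro that[of j]) (auto simp: triplet_commute)
  qed
qed

lemma sum_partner_pairs_bounds:
  assumes ip: "{i, p} \<in> E"
  shows "real (m - 2) * (epsmin * bmin / 2) \<le> (\<Sum>(j, k)\<in>partner_pairs i. triplet i j k - acc i)"
    and "(\<Sum>(j, k)\<in>partner_pairs i. triplet i j k - acc i) \<le> real (m - 2) * (epsmax / (2 * bmin * amin))"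
proof -
  have bounds: "epsmin * bmin / 2 \<le> triplet i j k - acc i"
    "triplet i j k - acc i \<le> epsmax / (2 * bmin * amin)" if "(j, k) \<in> partner_pairs i" for j k
    using partner_pairs_triplet[OF ip that] triplet_through_partner_bounds[OF ip] by metis+
  show "real (m - 2) * (epsmin * bmin / 2) \<le> (\<Sum>(j, k)\<in>partner_pairs i. triplet i j k - acc i)"
    unfolding card_partner_pairs[OF ip, symmetric] by (rule sum_bounded_below) (use bounds in auto)
  show "(\<Sum>(j, k)\<in>partner_pairs i. triplet i j k - acc i) \<le> real (m - 2) * (epsmax / (2 * bmin * amin))"
    unfolding card_partner_pairs[OF ip, symmetric] by (rule sum_bounded_above) (use bounds in auto)
qed

lemma abar_minus_acc_eq:
  assumes "i < m"
  shows "ising_abar m thY th thE E i - acc i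
    = 2 * ((\<Sum>(j, k)\<in>partner_pairs i. triplet i j k - acc i) + (\<Sum>(j, k)\<in>edge_pairs i. triplet i j k - acc i))
      / ((real m - 1) * (real m - 2))"
  using abar_minus_acc_eq_average[OF assms] sum_other_pairs_split[OF assms] card_other_pairs[OF assms]
  by simp


lemma abar_minus_acc_bounds_paired:
  assumes ip: "{i, p} \<in> E"
  shows "epsmin * bmin / (real m - 1)
      - (real (card E) - 1) * epsmax / ((real m - 1) * (real m - 2) * bmin ^ 2 * amin ^ 2)
      \<le> ising_abar m thY th thE E i - acc i"
    and "ising_abar m thY th thE E i - acc i \<le> epsmax / ((real m - 1) * bmin * amin)"
proof -
  define S1 S2 where "S1 = (\<Sum>(j, k)\<in>partner_pairs i. triplet i j k - acc i)"
    and "S2 = (\<Sum>(j, k)\<in>edge_pairs i. triplet i j k - acc i)"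
  define u v where "u = real m - 1" and "v = real m - 2"
  have "i < m"
    using edge_less[OF ip] by simp
  have "{e\<in>E. i \<notin> e} = E - {{i, p}}"
    using edges_containing[OF ip] by blast
  moreover have "0 < card E"
    using ip finite_E card_gt_0_iff by blast
  ultimately have n: "real (card {e\<in>E. i \<notin> e}) = real (card E) - 1"
    using ip by (simp add: of_nat_diff)
  have uv: "real (m - 2) = v" "0 < u" "0 < v"
    using m_ge_3 by (auto simp: u_def v_def of_nat_diff)
  have diff: "ising_abar m thY th thE E i - acc i = 2 * (S1 + S2) / (u * v)"
    unfolding S1_def S2_def u_def v_def by (rule abar_minus_acc_eq[OF \<open>i < m\<close>])
  note S1 = sum_partner_pairs_bounds[OF ip, folded S1_def, unfolded uv(1)]
  note S2 = sum_edge_pairs_bounds[OF \<open>i < m\<close>, folded S2_def, unfolded n]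
  have "0 \<le> real (card E) - 1"
    using n by (metis of_nat_0_le_iff)
  then have "(real (card E) - 1) * - (epsmin * bmin\<^sup>2 / 2) \<le> 0"
    using epsmin_pos by (simp add: mult_nonneg_nonneg)
  then have "S1 + S2 \<le> v * (epsmax / (2 * bmin * amin))"
    using S1(2) S2(2) by linarith
  then have "2 * (S1 + S2) / (u * v) \<le> 2 * (v * (epsmax / (2 * bmin * amin))) / (u * v)"
    using uv by (intro divide_right_mono mult_left_mono) auto
  also have "\<dots> = epsmax / (u * bmin * amin)"
    using uv bmin_pos amin_pos by (simp add: field_simps)
  finally show "ising_abar m thY th thE E i - acc i \<le> epsmax / ((real m - 1) * bmin * amin)"
    unfolding diff u_def .
  have "epsmin * bmin / u - (real (card E) - 1) * epsmax / (u * v * bmin ^ 2 * amin ^ 2)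
    = 2 * (v * (epsmin * bmin / 2) + (real (card E) - 1) * - (epsmax / (2 * bmin\<^sup>2 * amin\<^sup>2))) / (u * v)"
    using uv bmin_pos amin_pos by (simp add: field_simps)
  also have "\<dots> \<le> 2 * (S1 + S2) / (u * v)"
    using S1(1) S2(1) uv by (intro divide_right_mono mult_left_mono) auto
  finally show "epsmin * bmin / (real m - 1)
      - (real (card E) - 1) * epsmax / ((real m - 1) * (real m - 2) * bmin ^ 2 * amin ^ 2)
      \<le> ising_abar m thY th thE E i - acc i"
    unfolding diff u_def v_def .
qed

lemma abar_minus_acc_bounds_isolated:
  assumes "i < m" and isolated: "\<forall>e\<in>E. i \<notin> e"
  shows "- real (card E) * epsmax / ((real m - 1) * (real m - 2) * bmin ^ 2 * amin ^ 2)
      \<le> ising_abar m thY th thE E i - acc i"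
    and "ising_abar m thY th thE E i - acc i
      \<le> - real (card E) * epsmin * bmin ^ 2 / ((real m - 1) * (real m - 2))"
proof -
  define S where "S = (\<Sum>(j, k)\<in>edge_pairs i. triplet i j k - acc i)"
  define u v where "u = real m - 1" and "v = real m - 2"
  have "partner_pairs i = {}" "{e\<in>E. i \<notin> e} = E"
    using isolated by (auto simp: partner_pairs_def)
  then have diff: "ising_abar m thY th thE E i - acc i = 2 * S / (u * v)"
    using abar_minus_acc_eq[OF assms(1)] by (simp add: S_def u_def v_def)
  note bounds = sum_edge_pairs_bounds[OF assms(1), folded S_def, unfolded \<open>{e\<in>E. i \<notin> e} = E\<close>]
  have uv: "0 < u" "0 < v"
    using m_ge_3 by (auto simp: u_def v_def)
  have "- real (card E) * epsmax / (u * v * bmin ^ 2 * amin ^ 2)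
    = 2 * (real (card E) * - (epsmax / (2 * bmin\<^sup>2 * amin\<^sup>2))) / (u * v)"
    using uv bmin_pos amin_pos by (simp add: field_simps)
  also have "\<dots> \<le> 2 * S / (u * v)"
    using bounds(1) uv by (intro divide_right_mono mult_left_mono) auto
  finally show "- real (card E) * epsmax / ((real m - 1) * (real m - 2) * bmin ^ 2 * amin ^ 2)
      \<le> ising_abar m thY th thE E i - acc i"
    unfolding diff u_def v_def .
  have "2 * S / (u * v) \<le> 2 * (real (card E) * - (epsmin * bmin\<^sup>2 / 2)) / (u * v)"
    using bounds(2) uv by (intro divide_right_mono mult_left_mono) auto
  also have "\<dots> = - real (card E) * epsmin * bmin ^ 2 / (u * v)"
    by simp
  finally show "ising_abar m thY th thE E i - acc i
      \<le> - real (card E) * epsmin * bmin ^ 2 / ((real m - 1) * (real m - 2))"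
    unfolding diff u_def v_def .
qed

end

theorem lemma1:
  fixes m :: nat and thY :: real and th :: "nat \<Rightarrow> real"
    and thE :: "nat set \<Rightarrow> real" and E :: "nat set set"
    and bmin epsmin epsmax :: real and i :: nat
  assumes m3: "m \<ge> 3"
    and E_pairs: "\<forall>e\<in>E. e \<subseteq> {0..<m} \<and> card e = 2"
    and E_disj: "\<forall>e\<in>E. \<forall>e'\<in>E. e \<noteq> e' \<longrightarrow> e \<inter> e' = {}"
    and thY_pos: "thY > 0"
    and th_pos: "\<forall>j<m. th j > 0"
    and thE_pos: "\<forall>e\<in>E. thE e > 0"
    and bmin_pos: "bmin > 0"
    and bmin_le: "\<forall>j<m. \<forall>k<m. j \<noteq> k \<longrightarrow> bmin \<le> ising_mom m thY th thE E j k"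
    and epsmin_pos: "epsmin > 0"
    and eps_bounds: "\<forall>j k. {j, k} \<in> E \<longrightarrow>
         epsmin \<le> ising_mom m thY th thE E j k
                    - ising_acc m thY th thE E j * ising_acc m thY th thE E k
       \<and> ising_mom m thY th thE E j k
                    - ising_acc m thY th thE E j * ising_acc m thY th thE E k \<le> epsmax"
    and i_lt: "i < m"
  shows "((\<exists>e\<in>E. i \<in> e) \<longrightarrow>
            epsmin * bmin / (real m - 1)
              - (real (card E) - 1) * epsmax
                / ((real m - 1) * (real m - 2) * bmin ^ 2 * (ising_amin m thY th thE E) ^ 2)
            \<le> ising_abar m thY th thE E i - ising_acc m thY th thE E i
          \<and> ising_abar m thY th thE E i - ising_acc m thY th thE E i
            \<le> epsmax / ((real m - 1) * bmin * ising_amin m thY th thE E))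
       \<and> ((\<forall>e\<in>E. i \<notin> e) \<longrightarrow>
            - real (card E) * epsmax
                / ((real m - 1) * (real m - 2) * bmin ^ 2 * (ising_amin m thY th thE E) ^ 2)
            \<le> ising_abar m thY th thE E i - ising_acc m thY th thE E i
          \<and> ising_abar m thY th thE E i - ising_acc m thY th thE E i
            \<le> - real (card E) * epsmin * bmin ^ 2 / ((real m - 1) * (real m - 2)))"
proof -
  interpret ising_pairwise_bounds m thY th thE E bmin epsmin epsmax
    using assms by unfold_locales auto
  show ?thesis
    using abar_minus_acc_bounds_paired abar_minus_acc_bounds_isolated[OF i_lt] by (metis edge_partner)
qed

end
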